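(* Let $\kappa>0$, $u_0>0$, and consider the sessile liquid channel with parameter $u_0$ and contact angle $\gamma\in(0,\pi/2]$ resting on $\Pi$, with volume $\mathcal V(\gamma)$. Then $$\mathcal V(\gamma)>\frac{\gamma-\sin\gamma\cos\gamma}{\kappa^2u(\gamma)^2}.$$
   Context: For $u_0>0$, $(r(\psi),u(\psi))$, $\psi\in[0,\pi]$, is the solution of $\frac{dr}{d\psi}=\frac{\cos\psi}{\kappa u}$, $\frac{du}{d\psi}=\frac{\sin\psi}{\kappa u}$, $r(0)=0$, $u(0)=u_0$ (profile of a $\kappa$-cylindrical surface parametrized by inclination angle). The channel with contact angle $\gamma$ is the arc $\psi\in[0,\gamma]$ reflected in $r\mapsto-r$, resting on the line $u=u(\gamma)$; its volume per unit length is $\mathcal V(\gamma)=2\big(r(\gamma)u(\gamma)-\frac{\sin\gamma}\kappa\big)$. *)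

theory Defs
  imports Complex_Main
begin

definition kappa_profile :: "real \<Rightarrow> real \<Rightarrow> (real \<Rightarrow> real) \<Rightarrow> (real \<Rightarrow> real) \<Rightarrow> bool" where
  "kappa_profile \<kappa> u0 r u \<longleftrightarrow>
     r 0 = 0 \<and> u 0 = u0 \<and>
     (\<forall>\<psi>\<in>{0..pi}. (r has_real_derivative cos \<psi> / (\<kappa> * u \<psi>)) (at \<psi> within {0..pi}) \<and>
                   (u has_real_derivative sin \<psi> / (\<kappa> * u \<psi>)) (at \<psi> within {0..pi}))"

text \<open>Volume per unit length of the channel with contact angle gamma.\<close>
definition channel_volume :: "real \<Rightarrow> (real \<Rightarrow> real) \<Rightarrow> (real \<Rightarrow> real) \<Rightarrow> real \<Rightarrow> real" where
  "channel_volume \<kappa> r u \<gamma> = 2 * (r \<gamma> * u \<gamma> - sin \<gamma> / \<kappa>)"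

end

(* u^2 + 2 cos \<psi> / \<kappa> is a first integral of the profile equations, so
   u^2 = u0^2 + 2 (1 - cos \<psi>) / \<kappa>: u stays positive and is increasing on [0, pi].
   The function r - sin \<psi> / (\<kappa> u) vanishes at 0 and has derivative sin^2 \<psi> / (\<kappa>^2 u^3) > 0,
   hence r > sin \<psi> / (\<kappa> u) for \<psi> > 0. As the volume has derivative 2 r sin \<psi> / (\<kappa> u),
   on (0, \<gamma>) it grows faster than 2 sin^2 \<psi> / (\<kappa> u)^2 >= 2 sin^2 \<psi> / (\<kappa> u(\<gamma>))^2,
   which is the derivative of (\<psi> - sin \<psi> cos \<psi>) / (\<kappa> u(\<gamma>))^2. *)

theory Submission
  imports Defs "HOL-Analysis.Analysis"
begin

lemma first_zero_of_continuous:
  fixes f :: "real \<Rightarrow> real"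
  assumes "a \<le> b" and cont: "continuous_on {a..b} f" and "f a > 0" "f b \<le> 0"
  obtains t where "a < t" "t \<le> b" "f t = 0" "\<And>s. a \<le> s \<Longrightarrow> s < t \<Longrightarrow> f s > 0"
proof -
  define Z where "Z = {x \<in> {a..b}. f x = 0}"
  have zero_below: "\<exists>w\<in>Z. w \<le> s" if s: "a \<le> s" "s \<le> b" "f s \<le> 0" for s
  proof -
    have "continuous_on {a..s} f"
      using s by (intro continuous_on_subset[OF cont]) auto
    then obtain w where "a \<le> w" "w \<le> s" "f w = 0"
      using IVT2'[of f s 0 a] s \<open>f a > 0\<close> by auto
    then show ?thesis
      using s unfolding Z_def by auto
  qed
  have "closed Z"
    unfolding Z_def using continuous_closed_preimage_constant[OF cont] by simp
  moreover have "Z \<noteq> {}"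
    using zero_below[of b] assms by auto
  moreover have bdd: "bdd_below Z"
    unfolding Z_def by (rule bdd_belowI[of _ a]) auto
  ultimately have "Inf Z \<in> Z"
    by (rule closed_contains_Inf[rotated -1])
  show ?thesis
  proof
    show "f (Inf Z) = 0" "Inf Z \<le> b"
      using \<open>Inf Z \<in> Z\<close> unfolding Z_def by auto
    have "a \<le> Inf Z" "Inf Z \<noteq> a"
      using \<open>Inf Z \<in> Z\<close> \<open>f a > 0\<close> unfolding Z_def by auto
    then show "a < Inf Z"
      by simp
    show "f s > 0" if s: "a \<le> s" "s < Inf Z" for s
    proof (rule ccontr)
      assume "\<not> f s > 0"
      then obtain w where "w \<in> Z" "w \<le> s"
        using zero_below[of s] s \<open>Inf Z \<le> b\<close> by auto
      moreover have "Inf Z \<le> w"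
        using \<open>w \<in> Z\<close> bdd by (rule cInf_lower)
      ultimately show False
        using s by linarith
    qed
  qed
qed

lemma DERIV_diff_sin_mul_cos: "((\<lambda>x. x - sin x * cos x) has_real_derivative 2 * (sin x)\<^sup>2) (at x)"
proof -
  have "((\<lambda>x. x - sin x * cos x) has_real_derivative 1 - (cos x * cos x - sin x * sin x)) (at x)"
    by (auto intro!: derivative_eq_intros)
  moreover have "1 - (cos x * cos x - sin x * sin x) = 2 * (sin x)\<^sup>2"
    using sin_cos_squared_add[of x] by (simp add: power2_eq_square)
  ultimately show ?thesis
    by simp
qed

locale kappa_cylinder =
  fixes \<kappa> u0 :: real and r u :: "real \<Rightarrow> real"
  assumes kappa_pos: "\<kappa> > 0" and u0_pos: "u0 > 0"
    and profile: "kappa_profile \<kappa> u0 r u"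
begin

lemma r_0: "r 0 = 0" and u_0: "u 0 = u0"
  using profile unfolding kappa_profile_def by auto

lemma r_has_derivative_within:
  "\<psi> \<in> {0..pi} \<Longrightarrow> (r has_real_derivative cos \<psi> / (\<kappa> * u \<psi>)) (at \<psi> within {0..pi})"
  and u_has_derivative_within:
  "\<psi> \<in> {0..pi} \<Longrightarrow> (u has_real_derivative sin \<psi> / (\<kappa> * u \<psi>)) (at \<psi> within {0..pi})"
  using profile unfolding kappa_profile_def by auto

lemma r_has_derivative:
  assumes "0 < \<psi>" "\<psi> < pi"
  shows "(r has_real_derivative cos \<psi> / (\<kappa> * u \<psi>)) (at \<psi>)"
  using r_has_derivative_within[of \<psi>] assms by (simp add: at_within_Icc_at)

lemma u_has_derivative:
  assumes "0 < \<psi>" "\<psi> < pi"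
  shows "(u has_real_derivative sin \<psi> / (\<kappa> * u \<psi>)) (at \<psi>)"
  using u_has_derivative_within[of \<psi>] assms by (simp add: at_within_Icc_at)

lemma continuous_on_r: "continuous_on {0..pi} r"
  and continuous_on_u: "continuous_on {0..pi} u"
  unfolding continuous_on_eq_continuous_within
  using DERIV_continuous[OF r_has_derivative_within] DERIV_continuous[OF u_has_derivative_within]
  by blast+

(* Only valid while u > 0: where u vanishes, the equation u' = sin/(\<kappa> u) reads u' = 0,
   since x / 0 = 0. *)
lemma energy_conserved_while_positive:
  assumes "b \<in> {0..pi}" and pos: "\<And>s. 0 \<le> s \<Longrightarrow> s < b \<Longrightarrow> u s > 0"
  shows "(u b)\<^sup>2 + 2 * cos b / \<kappa> = u0\<^sup>2 + 2 / \<kappa>"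
proof (cases "b = 0")
  case False
  define E where "E \<psi> = (u \<psi>)\<^sup>2 + 2 * cos \<psi> / \<kappa>" for \<psi>
  have "E b = E 0"
  proof (rule DERIV_isconst_end[where f = E])
    show "0 < b"
      using assms False by auto
    show "continuous_on {0..b} E"
      unfolding E_def using assms(1) kappa_pos
      by (intro continuous_intros continuous_on_subset[OF continuous_on_u]) auto
    fix \<psi> assume "0 < \<psi>" "\<psi> < b"
    then have "u \<psi> > 0" "\<psi> < pi"
      using pos assms(1) by auto
    have "(E has_real_derivative 2 * u \<psi> * (sin \<psi> / (\<kappa> * u \<psi>)) - 2 * sin \<psi> / \<kappa>) (at \<psi>)"
      unfolding E_def using kappa_pos
      by (auto intro!: derivative_eq_intros u_has_derivative \<open>0 < \<psi>\<close> \<open>\<psi> < pi\<close>)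
    moreover have "2 * u \<psi> * (sin \<psi> / (\<kappa> * u \<psi>)) - 2 * sin \<psi> / \<kappa> = 0"
      using \<open>u \<psi> > 0\<close> kappa_pos by (simp add: field_simps)
    ultimately show "(E has_real_derivative 0) (at \<psi>)"
      by simp
  qed
  then show ?thesis
    unfolding E_def by (simp add: u_0)
qed (simp add: u_0)

lemma u_pos:
  assumes "\<psi> \<in> {0..pi}"
  shows "u \<psi> > 0"
proof (rule ccontr)
  assume "\<not> u \<psi> > 0"
  moreover have "continuous_on {0..\<psi>} u"
    using assms by (intro continuous_on_subset[OF continuous_on_u]) auto
  ultimately obtain t where "0 < t" "t \<le> \<psi>" "u t = 0" and "\<And>s. 0 \<le> s \<Longrightarrow> s < t \<Longrightarrow> u s > 0"
    using first_zero_of_continuous[of 0 \<psi> u] assms u_0 u0_pos by auto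
  then have "2 * cos t / \<kappa> = u0\<^sup>2 + 2 / \<kappa>"
    using energy_conserved_while_positive[of t] assms by simp
  moreover have "2 * cos t / \<kappa> \<le> 2 / \<kappa>"
    using kappa_pos by (simp add: divide_right_mono)
  moreover have "u0\<^sup>2 > 0"
    using u0_pos by simp
  ultimately show False
    by linarith
qed

lemma u_squared:
  assumes "\<psi> \<in> {0..pi}"
  shows "(u \<psi>)\<^sup>2 = u0\<^sup>2 + 2 * (1 - cos \<psi>) / \<kappa>"
proof -
  have "(u \<psi>)\<^sup>2 + 2 * cos \<psi> / \<kappa> = u0\<^sup>2 + 2 / \<kappa>"
    using assms u_pos by (intro energy_conserved_while_positive) auto
  moreover have "2 * (1 - cos \<psi>) / \<kappa> = 2 / \<kappa> - 2 * cos \<psi> / \<kappa>"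
    by (simp add: diff_divide_distrib right_diff_distrib)
  ultimately show ?thesis
    by linarith
qed

lemma u_mono:
  assumes "0 \<le> x" "x \<le> y" "y \<le> pi"
  shows "u x \<le> u y"
proof -
  have "cos y \<le> cos x"
    using assms by (rule cos_monotone_0_pi_le)
  then have "2 * (1 - cos x) / \<kappa> \<le> 2 * (1 - cos y) / \<kappa>"
    using kappa_pos by (intro divide_right_mono) auto
  then have "(u x)\<^sup>2 \<le> (u y)\<^sup>2"
    using u_squared[of x] u_squared[of y] assms by simp
  moreover have "u y > 0"
    using assms u_pos by simp
  ultimately show ?thesis
    using power2_le_imp_le less_imp_le by blast
qed

lemma sin_div_less_r:
  assumes "0 < \<psi>" "\<psi> \<le> pi"
  shows "sin \<psi> / (\<kappa> * u \<psi>) < r \<psi>"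
proof -
  define G where "G \<phi> = r \<phi> - sin \<phi> / (\<kappa> * u \<phi>)" for \<phi>
  have "G 0 < G \<psi>"
  proof (rule DERIV_pos_imp_increasing_open[OF \<open>0 < \<psi>\<close>])
    show "continuous_on {0..\<psi>} G"
      unfolding G_def using assms u_pos kappa_pos
      by (intro continuous_intros continuous_on_subset[OF continuous_on_r]
          continuous_on_subset[OF continuous_on_u]) (auto simp: less_le)
    fix \<phi> assume "0 < \<phi>" "\<phi> < \<psi>"
    then have "\<phi> < pi"
      using assms by simp
    have "u \<phi> > 0"
      using \<open>0 < \<phi>\<close> \<open>\<phi> < pi\<close> u_pos by simp
    have "sin \<phi> > 0"
      using \<open>0 < \<phi>\<close> \<open>\<phi> < pi\<close> by (rule sin_gt_zero)
    note r' = r_has_derivative[OF \<open>0 < \<phi>\<close> \<open>\<phi> < pi\<close>]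
      and u' = u_has_derivative[OF \<open>0 < \<phi>\<close> \<open>\<phi> < pi\<close>]
    have "(G has_real_derivative cos \<phi> / (\<kappa> * u \<phi>)
        - (cos \<phi> * (\<kappa> * u \<phi>) - sin \<phi> * (\<kappa> * (sin \<phi> / (\<kappa> * u \<phi>)))) / (\<kappa> * u \<phi>)\<^sup>2) (at \<phi>)"
      unfolding G_def using \<open>u \<phi> > 0\<close> kappa_pos
      by (auto intro!: derivative_eq_intros r' u' simp: power2_eq_square)
    moreover have "cos \<phi> / (\<kappa> * u \<phi>)
        - (cos \<phi> * (\<kappa> * u \<phi>) - sin \<phi> * (\<kappa> * (sin \<phi> / (\<kappa> * u \<phi>)))) / (\<kappa> * u \<phi>)\<^sup>2
        = (sin \<phi>)\<^sup>2 / (\<kappa>\<^sup>2 * (u \<phi>) ^ 3)"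
      using \<open>u \<phi> > 0\<close> kappa_pos by (simp add: field_simps power2_eq_square power3_eq_cube)
    moreover have "(sin \<phi>)\<^sup>2 / (\<kappa>\<^sup>2 * (u \<phi>) ^ 3) > 0"
      using \<open>u \<phi> > 0\<close> \<open>sin \<phi> > 0\<close> kappa_pos by simp
    ultimately show "\<exists>D. (G has_real_derivative D) (at \<phi>) \<and> D > 0"
      by auto
  qed
  then show ?thesis
    unfolding G_def by (simp add: r_0)
qed

lemma channel_volume_has_derivative:
  assumes "0 < \<psi>" "\<psi> < pi"
  shows "(channel_volume \<kappa> r u has_real_derivative 2 * r \<psi> * sin \<psi> / (\<kappa> * u \<psi>)) (at \<psi>)"
proof -
  have "u \<psi> > 0"
    using assms u_pos by simp
  note r' = r_has_derivative[OF assms] and u' = u_has_derivative[OF assms]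
  have "((\<lambda>\<phi>. 2 * (r \<phi> * u \<phi> - sin \<phi> / \<kappa>)) has_real_derivative
      2 * (cos \<psi> / (\<kappa> * u \<psi>) * u \<psi> + r \<psi> * (sin \<psi> / (\<kappa> * u \<psi>)) - cos \<psi> / \<kappa>)) (at \<psi>)"
    using kappa_pos by (auto intro!: derivative_eq_intros r' u')
  moreover have "2 * (cos \<psi> / (\<kappa> * u \<psi>) * u \<psi> + r \<psi> * (sin \<psi> / (\<kappa> * u \<psi>)) - cos \<psi> / \<kappa>)
      = 2 * r \<psi> * sin \<psi> / (\<kappa> * u \<psi>)"
    using \<open>u \<psi> > 0\<close> kappa_pos by (simp add: field_simps)
  ultimately show ?thesis
    unfolding channel_volume_def by simp
qed

lemma continuous_on_channel_volume: "continuous_on {0..pi} (channel_volume \<kappa> r u)"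
  unfolding channel_volume_def using kappa_pos
  by (intro continuous_intros continuous_on_r continuous_on_u) simp

lemma channel_volume_rate_gt:
  assumes "0 < \<psi>" "\<psi> < \<gamma>" "\<gamma> \<le> pi"
  shows "2 * (sin \<psi>)\<^sup>2 / (\<kappa>\<^sup>2 * (u \<gamma>)\<^sup>2) < 2 * r \<psi> * sin \<psi> / (\<kappa> * u \<psi>)"
proof -
  have "u \<psi> > 0"
    using assms u_pos by simp
  have "sin \<psi> > 0"
    using assms by (intro sin_gt_zero) auto
  define q where "q = sin \<psi> / (\<kappa> * u \<psi>)"
  have "0 < q" "q < r \<psi>"
    unfolding q_def using \<open>u \<psi> > 0\<close> \<open>sin \<psi> > 0\<close> kappa_pos sin_div_less_r[of \<psi>] assms
    by auto
  have "u \<psi> \<le> u \<gamma>"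
    using assms by (intro u_mono) auto
  then have "(sin \<psi>)\<^sup>2 / (\<kappa>\<^sup>2 * (u \<gamma>)\<^sup>2) \<le> q\<^sup>2"
    unfolding q_def using \<open>u \<psi> > 0\<close> kappa_pos
    by (simp add: power_divide power_mult_distrib divide_left_mono mult_mono)
  also have "q\<^sup>2 < r \<psi> * q"
    using \<open>0 < q\<close> \<open>q < r \<psi>\<close> by (simp add: power2_eq_square)
  finally show ?thesis
    unfolding q_def by simp
qed

lemma channel_volume_gt:
  assumes "0 < \<gamma>" "\<gamma> \<le> pi"
  shows "(\<gamma> - sin \<gamma> * cos \<gamma>) / (\<kappa>\<^sup>2 * (u \<gamma>)\<^sup>2) < channel_volume \<kappa> r u \<gamma>"
proof -
  define c where "c = 1 / (\<kappa>\<^sup>2 * (u \<gamma>)\<^sup>2)"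
  define H where "H \<psi> = channel_volume \<kappa> r u \<psi> - c * (\<psi> - sin \<psi> * cos \<psi>)" for \<psi>
  have "H 0 < H \<gamma>"
  proof (rule DERIV_pos_imp_increasing_open[OF \<open>0 < \<gamma>\<close>])
    show "continuous_on {0..\<gamma>} H"
      unfolding H_def using assms
      by (intro continuous_intros continuous_on_subset[OF continuous_on_channel_volume]) auto
    fix \<psi> assume "0 < \<psi>" "\<psi> < \<gamma>"
    then have "(H has_real_derivative 2 * r \<psi> * sin \<psi> / (\<kappa> * u \<psi>) - c * (2 * (sin \<psi>)\<^sup>2)) (at \<psi>)"
      unfolding H_def[abs_def] using assms
      by (intro DERIV_diff DERIV_cmult channel_volume_has_derivative DERIV_diff_sin_mul_cos) auto
    moreover have "c * (2 * (sin \<psi>)\<^sup>2) < 2 * r \<psi> * sin \<psi> / (\<kappa> * u \<psi>)"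
      using channel_volume_rate_gt[OF \<open>0 < \<psi>\<close> \<open>\<psi> < \<gamma>\<close> assms(2)] unfolding c_def by simp
    ultimately show "\<exists>D. (H has_real_derivative D) (at \<psi>) \<and> D > 0"
      by auto
  qed
  moreover have "H 0 = 0"
    unfolding H_def channel_volume_def by (simp add: r_0)
  ultimately show ?thesis
    unfolding H_def c_def by simp
qed

end

theorem mainTheorem14:
  fixes \<kappa> u0 \<gamma> :: real and r u :: "real \<Rightarrow> real"
  assumes "\<kappa> > 0" and "u0 > 0"
    and "kappa_profile \<kappa> u0 r u"
    and "0 < \<gamma>" and "\<gamma> \<le> pi / 2"
  shows "channel_volume \<kappa> r u \<gamma> > (\<gamma> - sin \<gamma> * cos \<gamma>) / (\<kappa>^2 * (u \<gamma>)^2)"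
proof -
  interpret kappa_cylinder \<kappa> u0 r u
    using assms(1-3) by unfold_locales
  show ?thesis
    using channel_volume_gt[of \<gamma>] assms(4,5) pi_gt_zero by simp
qed

end
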